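(* Let $R$ be a tournament on $[n]=\{1,\dots,n\}$. Then there exist independent, proper, continuous random variables $X_1,\dots,X_n$ on the unit interval such that for all $i,j\in[n]$, $$P(X_i>X_j)>\tfrac12 \iff (i,j)\in R .$$
   Context: A tournament on a set $I$ is a subset $R\subset I\times I$ containing no pair $(i,i)$ such that for every pair of distinct $i,j\in I$ exactly one of $(i,j),(j,i)$ lies in $R$. A continuous random variable on the unit interval is a random variable $X$ whose distribution function $F$ is continuous and strictly increasing on $[0,1]$ with $F(0)=0$ and $F(1)=1$. Such an $X$ is proper if $E(X)=\tfrac12$. *)

theory Defs
  imports "HOL-Probability.Probability"
begin

definition tournament :: "'a set \<Rightarrow> ('a \<times> 'a) set \<Rightarrow> bool" where
  "tournament I R \<longleftrightarrow> R \<subseteq> I \<times> I \<and> (\<forall>i. (i, i) \<notin> R) \<and>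
     (\<forall>i\<in>I. \<forall>j\<in>I. i \<noteq> j \<longrightarrow> ((i, j) \<in> R \<longleftrightarrow> (j, i) \<notin> R))"

definition distr_fun :: "'a measure \<Rightarrow> ('a \<Rightarrow> real) \<Rightarrow> real \<Rightarrow> real" where
  "distr_fun M X x = measure M {\<omega> \<in> space M. X \<omega> \<le> x}"

definition cont_rv_unit :: "'a measure \<Rightarrow> ('a \<Rightarrow> real) \<Rightarrow> bool" where
  "cont_rv_unit M X \<longleftrightarrow> X \<in> borel_measurable M \<and>
     continuous_on {0..1} (distr_fun M X) \<and> strict_mono_on {0..1} (distr_fun M X) \<and>
     distr_fun M X 0 = 0 \<and> distr_fun M X 1 = 1"

definition proper_rv :: "'a measure \<Rightarrow> ('a \<Rightarrow> real) \<Rightarrow> bool" where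
  "proper_rv M X \<longleftrightarrow> integral\<^sup>L M X = 1 / 2"

end

theory Submission
  imports Defs
begin

text \<open>Each X_v is g_v(U_v) for independent uniform U_v on [0,1], where g_v is an increasing
  staircase: [0,1] is cut into T blocks, on the middle of block r the function g_v stays close
  to the level (r + t_v(r))/T, and a small linear term keeps it strictly increasing. Then X_i > X_j
  whenever U_i lies in a later block than U_j, or in the same block with a clearly higher level, so
  P(X_i > X_j) is about 1/2 - 1/(2T) + W/T^2, where W counts the blocks in which i is higher than j.
  With T = 2n^2 + 1, the levels on the first 2n^2 blocks come from 2n^2 rankings of the vertices,
  among which i is above j in at least n^2 + 1 whenever (i, j) \<in> R, and the last block fixes the
  mean at 1/2.
  The converse holds since P(X_i > X_j) and P(X_j > X_i) cannot both exceed 1/2.\<close>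

definition ramp :: "real \<Rightarrow> real \<Rightarrow> real \<Rightarrow> real" where
  "ramp a b u = max 0 (min 1 ((u - a) * inverse (b - a)))"

lemma continuous_on_ramp: "continuous_on S (ramp a b)"
  unfolding ramp_def by (intro continuous_intros)

lemma ramp_nonneg: "0 \<le> ramp a b u" and ramp_le_one: "ramp a b u \<le> 1"
  unfolding ramp_def by auto

lemma ramp_eq_0:
  assumes "u \<le> a" "a < b"
  shows "ramp a b u = 0"
proof -
  have "(u - a) * inverse (b - a) \<le> 0"
    using assms by (intro mult_nonpos_nonneg) auto
  then show ?thesis unfolding ramp_def by (auto simp: max_def min_def)
qed

lemma ramp_eq_1: "b \<le> u \<Longrightarrow> a < b \<Longrightarrow> ramp a b u = 1"
  unfolding ramp_def by (auto simp: max_def min_def field_simps)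

lemma ramp_eq_linear: "a \<le> u \<Longrightarrow> u \<le> b \<Longrightarrow> a < b \<Longrightarrow> ramp a b u = (u - a) / (b - a)"
  unfolding ramp_def by (auto simp: max_def min_def field_simps)

lemma ramp_mono: "a < b \<Longrightarrow> u \<le> v \<Longrightarrow> ramp a b u \<le> ramp a b v"
  unfolding ramp_def by (intro max.mono min.mono mult_right_mono) auto

lemma integral_ramp:
  assumes "0 \<le> a" "a < b" "b \<le> 1"
  shows "integral {0..1} (ramp a b) = 1 - (a + b) / 2"
proof -
  have int: "ramp a b integrable_on {x..y}" for x y
    by (intro integrable_continuous_interval continuous_on_ramp)
  have left: "integral {0..a} (ramp a b) = 0"
    using assms integral_cong[of "{0..a}" "ramp a b" "\<lambda>_. 0"] by (simp add: ramp_eq_0)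
  have right: "integral {b..1} (ramp a b) = 1 - b"
    using assms integral_cong[of "{b..1}" "ramp a b" "\<lambda>_. 1"] by (simp add: ramp_eq_1)
  have "((\<lambda>u. (u - a)\<^sup>2 / (2 * (b - a))) has_real_derivative (u - a) / (b - a)) (at u within {a..b})"
    for u
    using assms
    by (auto intro!: derivative_eq_intros simp: power2_eq_square) (simp add: divide_simps algebra_simps)
  then have "((\<lambda>u. (u - a) / (b - a)) has_integral (b - a)\<^sup>2 / (2 * (b - a)) - (a - a)\<^sup>2 / (2 * (b - a))) {a..b}"
    using assms
    by (intro fundamental_theorem_of_calculus) (auto simp: has_real_derivative_iff_has_vector_derivative)
  moreover have "(b - a)\<^sup>2 / (2 * (b - a)) - (a - a)\<^sup>2 / (2 * (b - a)) = (b - a) / 2"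
    using assms by (simp add: power2_eq_square divide_simps algebra_simps)
  ultimately have "integral {a..b} (\<lambda>u. (u - a) / (b - a)) = (b - a) / 2"
    by (metis integral_unique)
  moreover have "integral {a..b} (ramp a b) = integral {a..b} (\<lambda>u. (u - a) / (b - a))"
    using assms by (intro integral_cong) (simp add: ramp_eq_linear)
  ultimately have middle: "integral {a..b} (ramp a b) = (b - a) / 2"
    by simp
  have "integral {0..1} (ramp a b)
      = integral {0..a} (ramp a b) + integral {a..b} (ramp a b) + integral {b..1} (ramp a b)"
    using assms int by (simp add: Henstock_Kurzweil_Integration.integral_combine)
  then show ?thesis
    using left middle right by (simp add: field_simps)
qed

definition unit_uniform :: "real measure" where
  "unit_uniform = restrict_space lborel {0..1}"

lemma space_unit_uniform [simp]: "space unit_uniform = {0..1}"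
  unfolding unit_uniform_def by simp

lemma sets_unit_uniform: "A \<in> sets unit_uniform \<longleftrightarrow> A \<subseteq> {0..1} \<and> A \<in> sets borel"
  unfolding unit_uniform_def by (subst sets_restrict_space_iff) auto

lemma measure_unit_uniform: "A \<subseteq> {0..1} \<Longrightarrow> measure unit_uniform A = measure lborel A"
  unfolding unit_uniform_def by (rule measure_restrict_space) auto

lemma prob_space_unit_uniform: "prob_space unit_uniform"
  unfolding unit_uniform_def by (rule prob_space_restrict_space) auto

lemma borel_measurable_unit_uniform:
  "continuous_on {0..1} f \<Longrightarrow> f \<in> borel_measurable unit_uniform"
  unfolding unit_uniform_def
  by (subst measurable_cong_sets[OF sets_restrict_space_cong[OF sets_lborel] refl])
     (rule borel_measurable_continuous_on_restrict)

lemma integral_unit_uniform: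
  fixes f :: "real \<Rightarrow> real"
  assumes "continuous_on {0..1} f"
  shows "integral\<^sup>L unit_uniform f = integral {0..1} f"
proof -
  have "integral\<^sup>L unit_uniform f = integral\<^sup>L lborel (\<lambda>x. indicator {0..1} x *\<^sub>R f x)"
    unfolding unit_uniform_def by (rule integral_restrict_space) simp
  also have "\<dots> = integral {0..1} f"
    using set_borel_integral_eq_integral(2)[OF borel_integrable_atLeastAtMost'[OF assms]]
    by (simp add: set_lebesgue_integral_def)
  finally show ?thesis .
qed

lemma cont_rv_unit_unit_uniform:
  fixes g :: "real \<Rightarrow> real"
  assumes cont: "continuous_on {0..1} g" and mono: "strict_mono_on {0..1} g"
    and g0: "g 0 = 0" and g1: "g 1 = 1"
  shows "cont_rv_unit unit_uniform g"
proof -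
  let ?F = "distr_fun unit_uniform g"
  have F_g: "?F (g a) = a" if "a \<in> {0..1}" for a
  proof -
    have "{u \<in> space unit_uniform. g u \<le> g a} = {0..a}"
      using that strict_mono_on_less_eq[OF mono] by auto
    then show ?thesis using that by (simp add: distr_fun_def measure_unit_uniform)
  qed
  have image: "g ` {0..1} = {0..1}"
  proof
    show "g ` {0..1} \<subseteq> {0..1}"
      using strict_mono_on_less_eq[OF mono, of 0] strict_mono_on_less_eq[OF mono, of _ 1] g0 g1 by auto
    show "{0..1} \<subseteq> g ` {0..1}"
      using IVT'[of g 0 _ 1] cont g0 g1 by force
  qed
  have "continuous_on {0..1} ?F"
    using continuous_on_inv[OF cont compact_Icc] F_g image by simp
  moreover have "strict_mono_on {0..1} ?F"
  proof (rule strict_mono_onI)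
    fix x y :: real assume xy: "x \<in> {0..1}" "y \<in> {0..1}" "x < y"
    then obtain a b where "a \<in> {0..1}" "b \<in> {0..1}" "x = g a" "y = g b"
      using image by (metis imageE)
    then show "?F x < ?F y"
      using xy F_g strict_mono_on_less[OF mono] by auto
  qed
  ultimately show ?thesis
    unfolding cont_rv_unit_def
    using F_g[of 0] F_g[of 1] g0 g1 borel_measurable_unit_uniform[OF cont] by simp
qed

lemma distr_fun_PiM_component:
  assumes M: "prob_space M" and i: "i \<in> I" and g: "g \<in> borel_measurable M"
  shows "distr_fun (PiM I (\<lambda>_. M)) (\<lambda>\<omega>. g (\<omega> i)) = distr_fun M g"
proof
  fix x
  let ?P = "PiM I (\<lambda>_. M)"
  have "{u \<in> space M. g u \<le> x} \<in> sets M"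
    using g by measurable
  then have "distr_fun M g x = measure ?P ((\<lambda>\<omega>. \<omega> i) -` {u \<in> space M. g u \<le> x} \<inter> space ?P)"
    unfolding distr_fun_def
    by (subst (1) distr_PiM_component[OF M i, symmetric]) (simp add: measure_distr i)
  also have "(\<lambda>\<omega>. \<omega> i) -` {u \<in> space M. g u \<le> x} \<inter> space ?P = {\<omega> \<in> space ?P. g (\<omega> i) \<le> x}"
    using i by (auto simp: space_PiM)
  finally show "distr_fun ?P (\<lambda>\<omega>. g (\<omega> i)) x = distr_fun M g x"
    unfolding distr_fun_def by simp
qed

lemma cont_rv_unit_PiM_component:
  assumes "prob_space M" "i \<in> I" "cont_rv_unit M g"
  shows "cont_rv_unit (PiM I (\<lambda>_. M)) (\<lambda>\<omega>. g (\<omega> i))"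
  using assms distr_fun_PiM_component[OF assms(1,2)]
  by (simp add: cont_rv_unit_def measurable_compose[OF measurable_component_singleton])

lemma proper_rv_PiM_component:
  assumes M: "prob_space M" and i: "i \<in> I" and g: "g \<in> borel_measurable M" "proper_rv M g"
  shows "proper_rv (PiM I (\<lambda>_. M)) (\<lambda>\<omega>. g (\<omega> i))"
proof -
  have "integral\<^sup>L (PiM I (\<lambda>_. M)) (\<lambda>\<omega>. g (\<omega> i)) = integral\<^sup>L (distr (PiM I (\<lambda>_. M)) M (\<lambda>\<omega>. \<omega> i)) g"
    using i g by (subst integral_distr) auto
  then show ?thesis
    using g by (simp add: distr_PiM_component[OF M i] proper_rv_def)
qed

lemma indep_vars_PiM_components:
  assumes M: "prob_space M" and g: "\<And>i. i \<in> I \<Longrightarrow> g i \<in> borel_measurable M"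
  shows "prob_space.indep_vars (PiM I (\<lambda>_. M)) (\<lambda>_. borel) (\<lambda>i \<omega>. g i (\<omega> i)) I"
proof -
  interpret P: product_prob_space "\<lambda>_. M" I
    using M by (intro product_prob_spaceI)
  have "P.indep_vars (\<lambda>_. M) (\<lambda>i \<omega>. \<omega> i) I"
  proof (cases "I = {}")
    case True
    show ?thesis
      by (subst P.indep_vars_def, subst P.indep_sets_def) (simp add: True)
  next
    case False
    have "distr (PiM I (\<lambda>_. M)) (PiM I (\<lambda>_. M)) (\<lambda>x. restrict x I) = PiM I (\<lambda>_. M)"
      by (subst distr_cong[OF refl refl, where g = "\<lambda>x. x"]) (auto simp: space_PiM)
    also have "\<dots> = PiM I (\<lambda>i. distr (PiM I (\<lambda>_. M)) M (\<lambda>x. x i))"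
      by (rule PiM_cong) (auto simp: distr_PiM_component[OF M])
    finally show ?thesis
      using False by (subst P.indep_vars_iff_distr_eq_PiM') auto
  qed
  then show ?thesis
    by (rule P.indep_vars_compose2) (rule g)
qed

lemma measure_PiM_Union_rectangles:
  assumes M: "prob_space M" and ij: "i \<in> I" "j \<in> I" "i \<noteq> j"
    and K: "finite K" "disjoint_family_on A K"
    and AB: "\<And>k. k \<in> K \<Longrightarrow> A k \<in> sets M" "\<And>k. k \<in> K \<Longrightarrow> B k \<in> sets M"
  shows "measure (PiM I (\<lambda>_. M)) (\<Union>k\<in>K. {\<omega> \<in> space (PiM I (\<lambda>_. M)). \<omega> i \<in> A k \<and> \<omega> j \<in> B k})
       = (\<Sum>k\<in>K. measure M (A k) * measure M (B k))"
proof -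
  interpret P: product_prob_space "\<lambda>_. M" I
    using M by (intro product_prob_spaceI)
  let ?E = "\<lambda>k. {\<omega> \<in> space (PiM I (\<lambda>_. M)). \<omega> i \<in> A k \<and> \<omega> j \<in> B k}"
  let ?C = "\<lambda>k l. if l = i then A k else B k"
  have E: "?E k = {\<omega> \<in> space (PiM I (\<lambda>_. M)). \<forall>l\<in>{i, j}. \<omega> l \<in> ?C k l}" for k
    using ij by auto
  have "measure (PiM I (\<lambda>_. M)) (?E k) = measure M (A k) * measure M (B k)" if "k \<in> K" for k
  proof -
    have "emeasure (PiM I (\<lambda>_. M)) (?E k) = emeasure M (A k) * emeasure M (B k)"
      unfolding E using ij AB[OF that] by (subst P.emeasure_PiM_Collect) auto
    also have "\<dots> = ennreal (measure M (A k) * measure M (B k))"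
      by (simp add: P.M.emeasure_eq_measure ennreal_mult'')
    finally show ?thesis
      by (simp add: P.emeasure_eq_measure)
  qed
  moreover have "disjoint_family_on ?E K"
    using K(2) by (auto simp: disjoint_family_on_def)
  moreover have "?E k \<in> sets (PiM I (\<lambda>_. M))" if "k \<in> K" for k
    using ij AB[OF that] by (intro sets_Collect_single' sets.sets_Collect_conj) auto
  ultimately show ?thesis
    using K(1) by (subst measure_finite_Union) (auto simp: P.emeasure_eq_measure)
qed

lemma (in prob_space) prob_greater_add_prob_less_le_1:
  fixes X Y :: "'a \<Rightarrow> real"
  assumes "X \<in> borel_measurable M" "Y \<in> borel_measurable M"
  shows "prob {\<omega> \<in> space M. Y \<omega> < X \<omega>} + prob {\<omega> \<in> space M. X \<omega> < Y \<omega>} \<le> 1"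
proof -
  have "{\<omega> \<in> space M. Y \<omega> < X \<omega>} \<in> events" "{\<omega> \<in> space M. X \<omega> < Y \<omega>} \<in> events"
    using assms by measurable
  then have "prob {\<omega> \<in> space M. Y \<omega> < X \<omega>} + prob {\<omega> \<in> space M. X \<omega> < Y \<omega>}
      = prob ({\<omega> \<in> space M. Y \<omega> < X \<omega>} \<union> {\<omega> \<in> space M. X \<omega> < Y \<omega>})"
    by (intro finite_measure_Union[symmetric]) auto
  also have "\<dots> \<le> 1" by (rule prob_le_1)
  finally show ?thesis .
qed

lemma (in prob_space) prob_less_gt_half_iff_tournament:
  fixes X :: "'i \<Rightarrow> 'a \<Rightarrow> real"
  assumes tour: "tournament I R" and meas: "\<And>i. i \<in> I \<Longrightarrow> X i \<in> borel_measurable M"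
    and wins: "\<And>i j. (i, j) \<in> R \<Longrightarrow> 1/2 < prob {\<omega> \<in> space M. X j \<omega> < X i \<omega>}"
    and ij: "i \<in> I" "j \<in> I"
  shows "1/2 < prob {\<omega> \<in> space M. X j \<omega> < X i \<omega>} \<longleftrightarrow> (i, j) \<in> R"
proof
  assume gt: "1/2 < prob {\<omega> \<in> space M. X j \<omega> < X i \<omega>}"
  show "(i, j) \<in> R"
  proof (rule ccontr)
    assume "(i, j) \<notin> R"
    moreover have "i \<noteq> j"
      using gt by auto
    ultimately have "(j, i) \<in> R"
      using tour ij unfolding tournament_def by blast
    then show False
      using gt wins[of j i] prob_greater_add_prob_less_le_1[OF meas meas, OF ij] by simp
  qed
qed (rule wins)

lemma sum_lessThan_split_at:
  fixes f :: "nat \<Rightarrow> 'a::comm_monoid_add"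
  assumes "r < T"
  shows "(\<Sum>s<T. f s) = (\<Sum>s<r. f s) + f r + (\<Sum>s\<in>{r<..<T}. f s)"
proof -
  have "{..<T} = insert r ({..<r} \<union> {r<..<T})" "{..<r} \<inter> {r<..<T} = {}"
    using assms by auto
  then show ?thesis
    by (simp add: sum.union_disjoint ac_simps)
qed

lemma sum_of_nat_lessThan_real: "(\<Sum>r<T. real r) = real T * (real T - 1) / 2"
  by (induction T) (auto simp: field_simps)

text \<open>The ramp over block r of the partition of [0,1] into T blocks: it climbs from 0 to 1
  across [r/T, (r+1)/T] and stays at height \<tau> on the middle part [(r+\<theta>)/T, (r+1-\<theta>)/T].\<close>
definition block_ramp :: "nat \<Rightarrow> real \<Rightarrow> real \<Rightarrow> nat \<Rightarrow> real \<Rightarrow> real" where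
  "block_ramp T \<theta> \<tau> r u = \<tau> * ramp (r / T) ((r + \<theta>) / T) u + (1 - \<tau>) * ramp ((r + 1 - \<theta>) / T) ((r + 1) / T) u"

definition staircase :: "nat \<Rightarrow> real \<Rightarrow> real \<Rightarrow> (nat \<Rightarrow> real) \<Rightarrow> real \<Rightarrow> real" where
  "staircase T e \<theta> t u = e * u + (1 - e) / T * (\<Sum>r<T. block_ramp T \<theta> (t r) r u)"

lemma continuous_on_block_ramp [continuous_intros]: "continuous_on S (block_ramp T \<theta> \<tau> r)"
  unfolding block_ramp_def by (intro continuous_intros continuous_on_ramp)

lemma continuous_on_staircase: "continuous_on S (staircase T e \<theta> t)"
  unfolding staircase_def by (intro continuous_intros)

locale staircase_params =
  fixes T :: nat and e \<theta> :: real and t :: "nat \<Rightarrow> real"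
  assumes T: "0 < T" and e: "0 < e" "e < 1" and \<theta>: "0 < \<theta>" "\<theta> < 1/2"
    and t: "\<And>r. 0 \<le> t r" "\<And>r. t r \<le> 1"
begin

abbreviation g :: "real \<Rightarrow> real" where
  "g \<equiv> staircase T e \<theta> t"

lemma block_ends_ordered:
  "real r / T < (real r + \<theta>) / T" "(real r + 1 - \<theta>) / T < (real r + 1) / T"
  using T \<theta> by (auto intro: divide_strict_right_mono)

lemma block_ramp_nonneg: "0 \<le> \<tau> \<Longrightarrow> \<tau> \<le> 1 \<Longrightarrow> 0 \<le> block_ramp T \<theta> \<tau> r u"
  unfolding block_ramp_def by (intro add_nonneg_nonneg mult_nonneg_nonneg ramp_nonneg) auto

lemma block_ramp_le_one:
  assumes "0 \<le> \<tau>" "\<tau> \<le> 1"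
  shows "block_ramp T \<theta> \<tau> r u \<le> 1"
proof -
  have "block_ramp T \<theta> \<tau> r u \<le> \<tau> * 1 + (1 - \<tau>) * 1"
    unfolding block_ramp_def using assms by (intro add_mono mult_left_mono ramp_le_one) auto
  then show ?thesis by simp
qed

lemma block_ramp_mono:
  "0 \<le> \<tau> \<Longrightarrow> \<tau> \<le> 1 \<Longrightarrow> u \<le> v \<Longrightarrow> block_ramp T \<theta> \<tau> r u \<le> block_ramp T \<theta> \<tau> r v"
  unfolding block_ramp_def using block_ends_ordered
  by (intro add_mono mult_left_mono ramp_mono) auto

lemma block_ramp_eq_0: "u \<le> real r / T \<Longrightarrow> block_ramp T \<theta> \<tau> r u = 0"
proof -
  assume u: "u \<le> real r / T"
  have "real r / T \<le> (real r + 1 - \<theta>) / T"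
    using T \<theta> by (intro divide_right_mono) auto
  then show ?thesis
    unfolding block_ramp_def using u block_ends_ordered by (simp add: ramp_eq_0)
qed

lemma block_ramp_eq_1: "(real r + 1) / T \<le> u \<Longrightarrow> block_ramp T \<theta> \<tau> r u = 1"
proof -
  assume u: "(real r + 1) / T \<le> u"
  have "(real r + \<theta>) / T \<le> (real r + 1) / T"
    using T \<theta> by (intro divide_right_mono) auto
  then show ?thesis
    unfolding block_ramp_def using u block_ends_ordered by (simp add: ramp_eq_1)
qed

lemma block_ramp_ge: "\<tau> \<le> 1 \<Longrightarrow> (real r + \<theta>) / T \<le> u \<Longrightarrow> \<tau> \<le> block_ramp T \<theta> \<tau> r u"
  unfolding block_ramp_def using block_ends_ordered
  by (simp add: ramp_eq_1 ramp_nonneg)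

lemma block_ramp_le: "0 \<le> \<tau> \<Longrightarrow> u \<le> (real r + 1 - \<theta>) / T \<Longrightarrow> block_ramp T \<theta> \<tau> r u \<le> \<tau>"
  unfolding block_ramp_def using block_ends_ordered mult_left_mono[OF ramp_le_one, of \<tau>]
  by (simp add: ramp_eq_0)

lemma integral_block_ramp:
  assumes "r < T"
  shows "integral {0..1} (block_ramp T \<theta> \<tau> r) = 1 - (real r + 1 - \<theta> / 2) / T + \<tau> * (1 - \<theta>) / T"
proof -
  have "(real r + 1) / T \<le> 1"
    using assms T by (simp add: field_simps)
  moreover have "0 \<le> real r / T" "0 \<le> (real r + 1 - \<theta>) / T" "(real r + \<theta>) / T \<le> (real r + 1) / T"
    using T \<theta> by (auto intro: divide_right_mono)
  moreover note block_ends_ordered[of r]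
  ultimately have ramp_integrals:
    "integral {0..1} (ramp (real r / T) ((real r + \<theta>) / T)) = 1 - (real r / T + (real r + \<theta>) / T) / 2"
    "integral {0..1} (ramp ((real r + 1 - \<theta>) / T) ((real r + 1) / T))
       = 1 - ((real r + 1 - \<theta>) / T + (real r + 1) / T) / 2"
    by (intro integral_ramp; linarith)+
  have "integral {0..1} (block_ramp T \<theta> \<tau> r)
      = \<tau> * integral {0..1} (ramp (real r / T) ((real r + \<theta>) / T))
        + (1 - \<tau>) * integral {0..1} (ramp ((real r + 1 - \<theta>) / T) ((real r + 1) / T))"
    unfolding block_ramp_def integral_mult_right[symmetric]
    by (intro integral_add integrable_continuous_interval continuous_intros continuous_on_ramp)
  also have "\<dots> = \<tau> * (1 - (real r / T + (real r + \<theta>) / T) / 2)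
      + (1 - \<tau>) * (1 - ((real r + 1 - \<theta>) / T + (real r + 1) / T) / 2)"
    unfolding ramp_integrals ..
  also have "\<dots> = 1 - (real r + 1 - \<theta> / 2) / T + \<tau> * (1 - \<theta>) / T"
    using T by (simp add: field_simps)
  finally show ?thesis .
qed

lemma staircase_strict_mono: "strict_mono g"
proof (rule strict_monoI)
  fix u v :: real
  assume "u < v"
  then have "(\<Sum>r<T. block_ramp T \<theta> (t r) r u) \<le> (\<Sum>r<T. block_ramp T \<theta> (t r) r v)"
    using t by (intro sum_mono block_ramp_mono) auto
  then have "(1 - e) / T * (\<Sum>r<T. block_ramp T \<theta> (t r) r u) \<le> (1 - e) / T * (\<Sum>r<T. block_ramp T \<theta> (t r) r v)"
    using e by (intro mult_left_mono) auto
  moreover have "e * u < e * v"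
    using e \<open>u < v\<close> by simp
  ultimately show "g u < g v"
    unfolding staircase_def by linarith
qed

lemma staircase_0: "g 0 = 0"
  unfolding staircase_def by (simp add: block_ramp_eq_0)

lemma staircase_1: "g 1 = 1"
proof -
  have "block_ramp T \<theta> (t r) r 1 = 1" if "r < T" for r
    using that T by (intro block_ramp_eq_1) (simp add: field_simps)
  then show ?thesis
    unfolding staircase_def using T e by simp
qed

lemma staircase_ge_on_block:
  assumes r: "r < T" and u: "(real r + \<theta>) / T \<le> u"
  shows "e * u + (1 - e) / T * (real r + t r) \<le> g u"
proof -
  have "block_ramp T \<theta> (t s) s u = 1" if "s < r" for s
  proof (rule block_ramp_eq_1)
    have "(real s + 1) / T \<le> (real r + \<theta>) / T"
      using that \<theta> by (intro divide_right_mono) auto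
    then show "(real s + 1) / T \<le> u" using u by linarith
  qed
  then have "(\<Sum>s<r. block_ramp T \<theta> (t s) s u) = real r"
    by simp
  moreover have "t r \<le> block_ramp T \<theta> (t r) r u"
    using t u by (intro block_ramp_ge) auto
  moreover have "0 \<le> (\<Sum>s\<in>{r<..<T}. block_ramp T \<theta> (t s) s u)"
    using t by (intro sum_nonneg block_ramp_nonneg) auto
  ultimately have "real r + t r \<le> (\<Sum>s<T. block_ramp T \<theta> (t s) s u)"
    using sum_lessThan_split_at[OF r, of "\<lambda>s. block_ramp T \<theta> (t s) s u"] by linarith
  then show ?thesis
    unfolding staircase_def using e by (intro add_left_mono mult_left_mono) auto
qed

lemma staircase_le_on_block:
  assumes r: "r < T" and u: "u \<le> (real r + 1 - \<theta>) / T"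
  shows "g u \<le> e * u + (1 - e) / T * (real r + t r)"
proof -
  have "(\<Sum>s<r. block_ramp T \<theta> (t s) s u) \<le> (\<Sum>s<r. 1)"
    using t by (intro sum_mono block_ramp_le_one) auto
  moreover have "block_ramp T \<theta> (t r) r u \<le> t r"
    using t u by (intro block_ramp_le) auto
  moreover have "block_ramp T \<theta> (t s) s u = 0" if "s \<in> {r<..<T}" for s
  proof (rule block_ramp_eq_0)
    have "(real r + 1 - \<theta>) / T \<le> real s / T"
      using that \<theta> by (intro divide_right_mono) auto
    then show "u \<le> real s / T" using u by linarith
  qed
  ultimately have "(\<Sum>s<T. block_ramp T \<theta> (t s) s u) \<le> real r + t r"
    using sum_lessThan_split_at[OF r, of "\<lambda>s. block_ramp T \<theta> (t s) s u"] by simp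
  then show ?thesis
    unfolding staircase_def using e by (intro add_left_mono mult_left_mono) auto
qed

lemma staircase_le_below_block:
  assumes r: "r < T" and u: "u \<le> real r / T"
  shows "g u \<le> e * u + (1 - e) / T * real r"
proof -
  have "(\<Sum>s<r. block_ramp T \<theta> (t s) s u) \<le> (\<Sum>s<r. 1)"
    using t by (intro sum_mono block_ramp_le_one) auto
  moreover have "block_ramp T \<theta> (t s) s u = 0" if "s \<in> {r<..<T} \<or> s = r" for s
  proof (rule block_ramp_eq_0)
    have "real r / T \<le> real s / T"
      using that by (intro divide_right_mono) auto
    then show "u \<le> real s / T" using u by linarith
  qed
  ultimately have "(\<Sum>s<T. block_ramp T \<theta> (t s) s u) \<le> real r"
    using sum_lessThan_split_at[OF r, of "\<lambda>s. block_ramp T \<theta> (t s) s u"] by simp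
  then show ?thesis
    unfolding staircase_def using e by (intro add_left_mono mult_left_mono) auto
qed

lemma integral_staircase:
  assumes mean: "(\<Sum>r<T. t r) = real T / 2"
  shows "integral {0..1} g = 1 / 2"
proof -
  have block_int: "block_ramp T \<theta> \<tau> r integrable_on {0..1}" for \<tau> r
    by (intro integrable_continuous_interval continuous_on_block_ramp)
  have sum_cont: "continuous_on {0..1} (\<lambda>u. \<Sum>r<T. block_ramp T \<theta> (t r) r u)"
    by (intro continuous_intros)
  have "integral {0..1} (\<lambda>u. \<Sum>r<T. block_ramp T \<theta> (t r) r u)
      = (\<Sum>r<T. 1 - (real r + 1 - \<theta> / 2) / T + t r * (1 - \<theta>) / T)"
    using block_int by (simp add: integral_sum integral_block_ramp)
  also have "\<dots> = real T / 2"
    using T unfolding sum.distrib sum_subtractf sum_divide_distrib[symmetric] sum_distrib_right[symmetric]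
    by (simp add: sum.distrib sum_of_nat_lessThan_real mean field_simps)
  finally have sum_integral: "integral {0..1} (\<lambda>u. \<Sum>r<T. block_ramp T \<theta> (t r) r u) = real T / 2" .
  have "integral {0..1} g
      = integral {0..1} (\<lambda>u. e * u) + integral {0..1} (\<lambda>u. (1 - e) / T * (\<Sum>r<T. block_ramp T \<theta> (t r) r u))"
    unfolding staircase_def using sum_cont
    by (intro integral_add integrable_continuous_interval continuous_intros)
  also have "\<dots> = e * (1 / 2) + (1 - e) / T * (real T / 2)"
    unfolding integral_mult_right sum_integral by (simp add: integral_ident)
  finally show ?thesis
    using T by (simp add: field_simps)
qed

lemma cont_rv_unit_staircase: "cont_rv_unit unit_uniform g"
  using staircase_strict_mono
  by (intro cont_rv_unit_unit_uniform continuous_on_staircase staircase_0 staircase_1)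
     (simp add: strict_mono_on_def strict_mono_def)

lemma proper_rv_staircase: "(\<Sum>r<T. t r) = real T / 2 \<Longrightarrow> proper_rv unit_uniform g"
  unfolding proper_rv_def
  by (simp add: integral_unit_uniform continuous_on_staircase integral_staircase)

end

lemma staircase_less_on_same_block:
  assumes "staircase_params T e \<theta> ti" "staircase_params T e \<theta> tj"
    and r: "r < T" and gap: "e < (1 - e) / T * c" "tj r + c \<le> ti r"
    and u: "(real r + \<theta>) / T \<le> u" and v: "v \<le> (real r + 1 - \<theta>) / T"
  shows "staircase T e \<theta> tj v < staircase T e \<theta> ti u"
proof -
  interpret i: staircase_params T e \<theta> ti by fact
  interpret j: staircase_params T e \<theta> tj by fact
  let ?C = "(1 - e) / T"
  have "v \<le> 1"
  proof -
    have "(real r + 1 - \<theta>) / T \<le> 1"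
      using r i.T i.\<theta> by (simp add: field_simps)
    then show ?thesis using v by linarith
  qed
  then have "e * v \<le> e"
    using i.e by (simp add: mult_left_le)
  moreover have "0 \<le> e * u"
    using i.e i.\<theta> u by (simp add: order_trans[OF _ u])
  moreover have "?C * (real r + tj r) + ?C * c \<le> ?C * (real r + ti r)"
    using gap(2) i.e mult_left_mono[of "real r + tj r + c" "real r + ti r" ?C]
    by (simp add: distrib_left)
  ultimately have "e * v + ?C * (real r + tj r) < e * u + ?C * (real r + ti r)"
    using gap(1) by linarith
  then show ?thesis
    using j.staircase_le_on_block[OF r v] i.staircase_ge_on_block[OF r u] by linarith
qed

lemma staircase_less_on_earlier_block:
  assumes "staircase_params T e \<theta> ti" "staircase_params T e \<theta> tj"
    and r: "r < T" and u: "(real r + \<theta>) / T \<le> u" and v: "v \<le> real r / T"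
  shows "staircase T e \<theta> tj v < staircase T e \<theta> ti u"
proof -
  interpret i: staircase_params T e \<theta> ti by fact
  interpret j: staircase_params T e \<theta> tj by fact
  have "real r / T < (real r + \<theta>) / T"
    by (rule i.block_ends_ordered)
  then have "e * v < e * u"
    using i.e u v by simp
  moreover have "0 \<le> (1 - e) / T * ti r"
    using i.e i.t by simp
  ultimately have "e * v + (1 - e) / T * real r < e * u + (1 - e) / T * (real r + ti r)"
    by (simp add: distrib_left)
  then show ?thesis
    using j.staircase_le_below_block[OF r v] i.staircase_ge_on_block[OF r u] by linarith
qed

lemma staircase_less_on_block:
  assumes i: "staircase_params T e \<theta> ti" and j: "staircase_params T e \<theta> tj"
    and r: "r < T" and gap: "e < (1 - e) / T * c"
    and u: "(real r + \<theta>) / T \<le> u" and v: "v < (real r + (if tj r + c \<le> ti r then 1 - \<theta> else 0)) / T"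
  shows "staircase T e \<theta> tj v < staircase T e \<theta> ti u"
proof (cases "tj r + c \<le> ti r")
  case True
  then show ?thesis
    using r gap u v by (intro staircase_less_on_same_block[OF i j]) (auto simp: add_diff_eq)
next
  case False
  then show ?thesis
    using r u v by (intro staircase_less_on_earlier_block[OF i j]) auto
qed

lemma block_probability_gt_half:
  fixes T W :: nat and \<theta> :: real
  assumes T: "1 \<le> T" and \<theta>: "0 < \<theta>" "\<theta> < 1/2"
    and W: "real T + 1 \<le> 2 * real W"
    and \<theta>_small: "real T ^ 2 < (1 - 2 * \<theta>) * (real T ^ 2 + 1)"
  shows "1/2 < (1 - \<theta>) / T * ((real T * (real T - 1) / 2 + (1 - \<theta>) * real W) / T)"
proof -
  have "(1 - 2 * \<theta>) * (real T ^ 2 + 1) / 2 = (1 - 2 * \<theta>) * (real T * (real T - 1) / 2 + (real T + 1) / 2)"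
    by (simp add: power2_eq_square field_simps)
  also have "\<dots> \<le> (1 - \<theta>) * (1 - \<theta>) * (real T * (real T - 1) / 2 + (real T + 1) / 2)"
    using T by (intro mult_right_mono) (auto simp: algebra_simps)
  also have "\<dots> \<le> (1 - \<theta>) * (1 - \<theta>) * (real T * (real T - 1) / 2 + real W)"
    using W \<theta> by (intro mult_left_mono add_left_mono) auto
  also have "\<dots> \<le> (1 - \<theta>) * (real T * (real T - 1) / 2 + (1 - \<theta>) * real W)"
  proof -
    have "(1 - \<theta>) * (real T * (real T - 1) / 2) \<le> real T * (real T - 1) / 2"
      using T \<theta> by (intro mult_left_le_one_le) auto
    then have "(1 - \<theta>) * (real T * (real T - 1) / 2 + real W) \<le> real T * (real T - 1) / 2 + (1 - \<theta>) * real W"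
      by (simp add: algebra_simps)
    then show ?thesis
      using \<theta> by (simp add: mult.assoc mult_left_mono)
  qed
  finally have "(1 - 2 * \<theta>) * (real T ^ 2 + 1) / 2 \<le> (1 - \<theta>) * (real T * (real T - 1) / 2 + (1 - \<theta>) * real W)" .
  then show ?thesis
    using \<theta>_small T by (simp add: field_simps power2_eq_square)
qed

lemma measure_block_events:
  fixes T :: nat and \<theta> :: real
  assumes T: "0 < T" and \<theta>: "0 \<le> \<theta>" "\<theta> \<le> 1" and W: "W \<subseteq> {..<T}"
    and ij: "i \<in> I" "j \<in> I" "i \<noteq> j"
  defines "b r \<equiv> (real r + (if r \<in> W then 1 - \<theta> else 0)) / T"
  shows "measure (PiM I (\<lambda>_. unit_uniform)) (\<Union>r\<in>{..<T}. {\<omega> \<in> space (PiM I (\<lambda>_. unit_uniform)).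
           \<omega> i \<in> {(real r + \<theta>) / T ..< (real r + 1) / T} \<and> \<omega> j \<in> {0..<b r}})
    = (1 - \<theta>) / T * ((real T * (real T - 1) / 2 + (1 - \<theta>) * real (card W)) / T)"
proof -
  define A where "A r = {(real r + \<theta>) / T ..< (real r + 1) / T}" for r
  have A_borel: "A r \<in> sets borel" for r
    unfolding A_def by simp
  have A_sub: "A r \<subseteq> {0..1}" and B_sub: "{0..<b r} \<subseteq> {0..1}" and b_nonneg: "0 \<le> b r"
    if "r < T" for r
  proof -
    have "(real r + 1) / T \<le> 1"
      using that T by (simp add: field_simps)
    moreover have "0 \<le> (real r + \<theta>) / T" "b r \<le> (real r + 1) / T"
      unfolding b_def using \<theta> by (auto intro!: divide_right_mono)
    ultimately show "A r \<subseteq> {0..1}" "{0..<b r} \<subseteq> {0..1}" "0 \<le> b r"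
      unfolding A_def b_def using \<theta> by (auto simp: atLeastLessThan_subseteq_atLeastAtMost_iff)
  qed
  have "(real s + 1) / T \<le> (real r + \<theta>) / T" if "s < r" for s r
    using that \<theta> by (intro divide_right_mono) auto
  then have "disjoint_family_on A {..<T}"
    unfolding disjoint_family_on_def A_def
    by (metis disjoint_iff atLeastLessThan_iff le_less_trans not_less nat_neq_iff)
  then have "measure (PiM I (\<lambda>_. unit_uniform))
      (\<Union>r\<in>{..<T}. {\<omega> \<in> space (PiM I (\<lambda>_. unit_uniform)). \<omega> i \<in> A r \<and> \<omega> j \<in> {0..<b r}})
      = (\<Sum>r<T. measure unit_uniform (A r) * measure unit_uniform {0..<b r})"
    using ij A_sub B_sub
    by (intro measure_PiM_Union_rectangles prob_space_unit_uniform) (auto simp: sets_unit_uniform A_borel)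
  also have "\<dots> = (\<Sum>r<T. (1 - \<theta>) / T * b r)"
  proof (rule sum.cong)
    fix r assume "r \<in> {..<T}"
    moreover have "(real r + \<theta>) / T \<le> (real r + 1) / T"
      using \<theta> by (intro divide_right_mono) auto
    ultimately show "measure unit_uniform (A r) * measure unit_uniform {0..<b r} = (1 - \<theta>) / T * b r"
      using A_sub B_sub b_nonneg by (auto simp: measure_unit_uniform A_def diff_divide_distrib[symmetric])
  qed simp
  also have "\<dots> = (1 - \<theta>) / T * ((real T * (real T - 1) / 2 + (1 - \<theta>) * real (card W)) / T)"
    unfolding b_def sum_distrib_left[symmetric] sum_divide_distrib[symmetric] sum.distrib
    using Int_absorb1[OF W] by (simp add: sum_of_nat_lessThan_real sum.If_cases Int_commute)
  finally show ?thesis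
    unfolding A_def .
qed

lemma prob_staircase_less_gt_half:
  assumes i: "staircase_params T e \<theta> ti" and j: "staircase_params T e \<theta> tj"
    and ij: "i \<in> I" "j \<in> I" "i \<noteq> j"
    and gap: "e < (1 - e) / T * c"
    and wins: "real T + 1 \<le> 2 * real (card {r\<in>{..<T}. tj r + c \<le> ti r})"
    and \<theta>_small: "real T ^ 2 < (1 - 2 * \<theta>) * (real T ^ 2 + 1)"
  shows "1/2 < measure (PiM I (\<lambda>_. unit_uniform))
    {\<omega> \<in> space (PiM I (\<lambda>_. unit_uniform)). staircase T e \<theta> tj (\<omega> j) < staircase T e \<theta> ti (\<omega> i)}"
    (is "_ < measure ?M ?less")
proof -
  interpret staircase_params T e \<theta> ti by (rule i)
  interpret P: prob_space ?M
    by (intro prob_space_PiM prob_space_unit_uniform)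
  define W where "W = {r\<in>{..<T}. tj r + c \<le> ti r}"
  define b where "b r = (real r + (if r \<in> W then 1 - \<theta> else 0)) / T" for r
  let ?E = "\<Union>r\<in>{..<T}. {\<omega> \<in> space ?M. \<omega> i \<in> {(real r + \<theta>) / T ..< (real r + 1) / T} \<and> \<omega> j \<in> {0..<b r}}"
  have "W \<subseteq> {..<T}"
    unfolding W_def by auto
  then have "measure ?M ?E = (1 - \<theta>) / T * ((real T * (real T - 1) / 2 + (1 - \<theta>) * real (card W)) / T)"
    unfolding b_def using T \<theta> ij by (intro measure_block_events) auto
  moreover have "1/2 < (1 - \<theta>) / T * ((real T * (real T - 1) / 2 + (1 - \<theta>) * real (card W)) / T)"
    using T \<theta> wins unfolding W_def by (intro block_probability_gt_half \<theta>_small) auto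
  ultimately have "1/2 < measure ?M ?E"
    by simp
  also have "\<dots> \<le> measure ?M ?less"
  proof (rule P.finite_measure_mono)
    show "?E \<subseteq> ?less"
      unfolding W_def b_def using staircase_less_on_block[OF i j _ gap] by auto
    have "staircase T e \<theta> tk \<in> borel_measurable unit_uniform" for tk
      by (intro borel_measurable_unit_uniform continuous_on_staircase)
    then show "?less \<in> P.events"
      using ij by measurable
  qed
  finally show ?thesis .
qed

text \<open>For a pair (a, b) the ranking v \<mapsto> v (if up) or its reverse v \<mapsto> -v, changed when
  (a, b) \<in> R so that a sits directly above b at the top (resp. at the bottom).\<close>
definition pair_ranking :: "nat \<Rightarrow> (nat \<times> nat) set \<Rightarrow> bool \<Rightarrow> nat \<Rightarrow> nat \<Rightarrow> nat \<Rightarrow> int" where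
  "pair_ranking n R up a b v =
     (if up then
        (if (a, b) \<in> R \<and> v = a then int n + 2 else if (a, b) \<in> R \<and> v = b then int n + 1 else int v)
      else
        (if (a, b) \<in> R \<and> v = a then - (int n + 1) else if (a, b) \<in> R \<and> v = b then - (int n + 2)
         else - int v))"

text \<open>The rankings 2p and 2p + 1 belong to the pair (a, b) with p = (a - 1) n + (b - 1).\<close>
definition ranking :: "nat \<Rightarrow> (nat \<times> nat) set \<Rightarrow> nat \<Rightarrow> nat \<Rightarrow> int" where
  "ranking n R r v = pair_ranking n R (even r) (r div 2 div n + 1) (r div 2 mod n + 1) v"

lemma abs_ranking_le: "v \<le> n \<Longrightarrow> \<bar>ranking n R r v\<bar> \<le> int n + 2"
  unfolding ranking_def pair_ranking_def by auto

lemma pair_ranking_wins: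
  assumes "i \<in> {1..n}" "j \<in> {1..n}" "i \<noteq> j" "(i, j) \<in> R" "(j, i) \<notin> R"
  shows "(if pair_ranking n R True a b j < pair_ranking n R True a b i then 1 else 0)
       + (if pair_ranking n R False a b j < pair_ranking n R False a b i then 1 else 0)
       = (if a = i \<and> b = j then 2 else (1::nat))"
  using assms unfolding pair_ranking_def by auto

lemma sum_lessThan_double:
  fixes f :: "nat \<Rightarrow> 'a::comm_monoid_add"
  shows "(\<Sum>r<2 * N. f r) = (\<Sum>p<N. f (2 * p) + f (2 * p + 1))"
  by (induction N) (auto simp: numeral_2_eq_2 add.assoc)

lemma pair_index_eq_iff:
  fixes n i j p :: nat
  assumes "j \<in> {1..n}" "1 \<le> i"
  shows "p div n + 1 = i \<and> p mod n + 1 = j \<longleftrightarrow> p = (i - 1) * n + (j - 1)"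
proof
  assume "p div n + 1 = i \<and> p mod n + 1 = j"
  then show "p = (i - 1) * n + (j - 1)"
    using div_mult_mod_eq[of p n] by (auto simp: algebra_simps)
next
  assume p: "p = (i - 1) * n + (j - 1)"
  obtain i' j' where ij': "i = Suc i'" "j = Suc j'"
    using assms by (cases i; cases j) auto
  have "j' < n"
    using assms ij' by auto
  then show "p div n + 1 = i \<and> p mod n + 1 = j"
    unfolding p ij' by simp
qed

lemma card_ranking_wins:
  assumes tour: "tournament {1..n} R" and ij: "(i, j) \<in> R"
  shows "n * n + 1 \<le> card {r \<in> {..<2 * (n * n)}. ranking n R r j < ranking n R r i}"
proof -
  have i: "i \<in> {1..n}" and j: "j \<in> {1..n}" and "i \<noteq> j"
    using tour ij unfolding tournament_def by auto
  then have "(j, i) \<notin> R"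
    using tour ij unfolding tournament_def by blast
  let ?win = "\<lambda>r. if ranking n R r j < ranking n R r i then 1 else (0::nat)"
  let ?p = "(i - 1) * n + (j - 1)"
  have p: "?p < n * n"
  proof -
    have "?p < (i - 1) * n + n"
      using j by auto
    also have "\<dots> = i * n"
      using i by (cases i) auto
    also have "\<dots> \<le> n * n"
      using i by auto
    finally show ?thesis .
  qed
  have "card {r \<in> {..<2 * (n * n)}. ranking n R r j < ranking n R r i} = (\<Sum>r<2 * (n * n). ?win r)"
    by (simp add: sum.inter_filter[symmetric])
  also have "\<dots> = (\<Sum>q<n * n. ?win (2 * q) + ?win (2 * q + 1))"
    by (rule sum_lessThan_double)
  also have "\<dots> = (\<Sum>q<n * n. 1 + (if q = ?p then 1 else 0))"
  proof (rule sum.cong)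
    fix q
    have "?win (2 * q) + ?win (2 * q + 1) = (if q div n + 1 = i \<and> q mod n + 1 = j then 2 else 1)"
      unfolding ranking_def using pair_ranking_wins[OF i j \<open>i \<noteq> j\<close> ij \<open>(j, i) \<notin> R\<close>] by simp
    then show "?win (2 * q) + ?win (2 * q + 1) = 1 + (if q = ?p then 1 else 0)"
      using pair_index_eq_iff[OF j, of i q] i by auto
  qed simp
  also have "\<dots> = n * n + 1"
    by (subst sum.distrib) (use p in simp)
  finally show ?thesis by simp
qed

text \<open>The last block of a profile compensates the others so that the mean height is 1/2;
  profile_step is small enough to keep even this height in [0,1].\<close>
definition profile_step :: "nat \<Rightarrow> real" where
  "profile_step n = 1 / (4 * (real n ^ 2 + 1) * (real n + 2))"

definition profile :: "nat \<Rightarrow> (nat \<times> nat) set \<Rightarrow> nat \<Rightarrow> nat \<Rightarrow> real" where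
  "profile n R v r =
     (if r < 2 * (n * n) then 1/2 + profile_step n * ranking n R r v
      else 1/2 - profile_step n * (\<Sum>s<2 * (n * n). ranking n R s v))"

lemma profile_step_pos: "0 < profile_step n"
  unfolding profile_step_def by (intro divide_pos_pos mult_pos_pos) (auto intro: add_nonneg_pos)

lemma profile_step_le: "profile_step n \<le> 1/8"
proof -
  have "1 * 2 \<le> (real n ^ 2 + 1) * (real n + 2)"
    by (intro mult_mono) auto
  then have "8 \<le> 4 * (real n ^ 2 + 1) * (real n + 2)"
    by linarith
  then show ?thesis
    unfolding profile_step_def by (intro divide_left_mono) auto
qed

lemma profile_step_mult: "profile_step n * (real n + 2) = 1 / (4 * (real n ^ 2 + 1))"
  unfolding profile_step_def by simp

lemma abs_profile_sub_half:
  assumes "v \<le> n"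
  shows "\<bar>profile n R v r - 1/2\<bar> \<le> 1/2"
proof -
  have pos: "0 < 4 * (real n ^ 2 + 1)"
    by (intro mult_pos_pos) (auto intro: add_nonneg_pos)
  have "profile_step n * real (2 * (n * n)) * (real n + 2) = real (2 * (n * n)) * (profile_step n * (real n + 2))"
    by (simp only: mult_ac)
  also have "\<dots> = real (2 * (n * n)) / (4 * (real n ^ 2 + 1))"
    unfolding profile_step_mult by simp
  also have "\<dots> \<le> 1/2"
    using pos by (simp add: pos_divide_le_eq power2_eq_square)
  finally have step: "profile_step n * real (2 * (n * n)) * (real n + 2) \<le> 1/2" .
  have step': "profile_step n * (real n + 2) \<le> 1/2"
    unfolding profile_step_mult using pos by (simp add: pos_divide_le_eq)
  have abs_step: "\<bar>profile_step n * x\<bar> = profile_step n * \<bar>x\<bar>" for x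
    using profile_step_pos[of n] by (simp add: abs_mult)
  show ?thesis
  proof (cases "r < 2 * (n * n)")
    case True
    have "\<bar>real_of_int (ranking n R r v)\<bar> \<le> real n + 2"
      using abs_ranking_le[OF assms, of R r] by linarith
    then have "profile_step n * \<bar>real_of_int (ranking n R r v)\<bar> \<le> profile_step n * (real n + 2)"
      using profile_step_pos by (intro mult_left_mono) (auto intro: less_imp_le)
    then show ?thesis
      using True step' by (simp add: profile_def abs_step)
  next
    case False
    have "\<bar>\<Sum>s<2 * (n * n). ranking n R s v\<bar> \<le> (\<Sum>s<2 * (n * n). \<bar>ranking n R s v\<bar>)"
      by (rule sum_abs)
    also have "\<dots> \<le> (\<Sum>s<2 * (n * n). int n + 2)"
      by (intro sum_mono abs_ranking_le assms)
    finally have "real_of_int \<bar>\<Sum>s<2 * (n * n). ranking n R s v\<bar> \<le> real_of_int (int (2 * (n * n)) * (int n + 2))"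
      by (simp only: of_int_le_iff sum_constant card_lessThan)
    then have "\<bar>real_of_int (\<Sum>s<2 * (n * n). ranking n R s v)\<bar> \<le> real (2 * (n * n)) * (real n + 2)"
      by simp
    then have "profile_step n * \<bar>real_of_int (\<Sum>s<2 * (n * n). ranking n R s v)\<bar>
        \<le> profile_step n * real (2 * (n * n)) * (real n + 2)"
      using profile_step_pos by (simp add: mult.assoc mult_left_mono)
    then show ?thesis
      using False step by (simp add: profile_def abs_step)
  qed
qed

lemma profile_nonneg: "v \<le> n \<Longrightarrow> 0 \<le> profile n R v r"
  and profile_le_one: "v \<le> n \<Longrightarrow> profile n R v r \<le> 1"
  using abs_profile_sub_half[of v n R r] by linarith+

lemma sum_profile: "(\<Sum>r<2 * (n * n) + 1. profile n R v r) = real (2 * (n * n) + 1) / 2"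
proof -
  have "(\<Sum>r<2 * (n * n). profile n R v r) = (\<Sum>r<2 * (n * n). 1/2 + profile_step n * ranking n R r v)"
    by (rule sum.cong) (auto simp: profile_def)
  also have "\<dots> = real (2 * (n * n)) / 2 + profile_step n * (\<Sum>r<2 * (n * n). ranking n R r v)"
    by (simp add: sum.distrib sum_distrib_left)
  finally show ?thesis
    by (simp add: profile_def)
qed

lemma card_profile_wins:
  assumes "tournament {1..n} R" "(i, j) \<in> R"
  shows "real (2 * (n * n) + 1) + 1
    \<le> 2 * real (card {r \<in> {..<2 * (n * n) + 1}. profile n R j r + profile_step n \<le> profile n R i r})"
proof -
  have "{r \<in> {..<2 * (n * n)}. ranking n R r j < ranking n R r i}
      \<subseteq> {r \<in> {..<2 * (n * n) + 1}. profile n R j r + profile_step n \<le> profile n R i r}"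
  proof safe
    fix r assume r: "r < 2 * (n * n)" "ranking n R r j < ranking n R r i"
    then have "real_of_int (ranking n R r j) + 1 \<le> real_of_int (ranking n R r i)"
      by linarith
    then have "profile_step n * (real_of_int (ranking n R r j) + 1) \<le> profile_step n * real_of_int (ranking n R r i)"
      using profile_step_pos by (intro mult_left_mono) (auto intro: less_imp_le)
    then show "profile n R j r + profile_step n \<le> profile n R i r"
      using r by (simp add: profile_def algebra_simps)
  qed auto
  then have "card {r \<in> {..<2 * (n * n)}. ranking n R r j < ranking n R r i}
      \<le> card {r \<in> {..<2 * (n * n) + 1}. profile n R j r + profile_step n \<le> profile n R i r}"
    by (intro card_mono) auto
  then show ?thesis
    using card_ranking_wins[OF assms] by linarith
qed

lemma staircases_realize_tournament:
  fixes n T :: nat and R :: "(nat \<times> nat) set" and t :: "nat \<Rightarrow> nat \<Rightarrow> real"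
  assumes tour: "tournament {1..n} R"
    and params: "\<And>v. v \<in> {1..n} \<Longrightarrow> staircase_params T e \<theta> (t v)"
    and mean: "\<And>v. v \<in> {1..n} \<Longrightarrow> (\<Sum>r<T. t v r) = real T / 2"
    and gap: "e < (1 - e) / T * c"
    and wins: "\<And>i j. (i, j) \<in> R \<Longrightarrow> real T + 1 \<le> 2 * real (card {r\<in>{..<T}. t j r + c \<le> t i r})"
    and \<theta>_small: "real T ^ 2 < (1 - 2 * \<theta>) * (real T ^ 2 + 1)"
  shows "\<exists>(M :: (nat \<Rightarrow> real) measure) (X :: nat \<Rightarrow> (nat \<Rightarrow> real) \<Rightarrow> real).
           prob_space M \<and>
           prob_space.indep_vars M (\<lambda>_. borel) X {1..n} \<and>
           (\<forall>i\<in>{1..n}. cont_rv_unit M (X i) \<and> proper_rv M (X i)) \<and>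
           (\<forall>i\<in>{1..n}. \<forall>j\<in>{1..n}.
              measure M {\<omega> \<in> space M. X i \<omega> > X j \<omega>} > 1 / 2 \<longleftrightarrow> (i, j) \<in> R)"
proof -
  let ?M = "PiM {1..n} (\<lambda>_. unit_uniform)"
  define X where "X i \<omega> = staircase T e \<theta> (t i) (\<omega> i)" for i and \<omega> :: "nat \<Rightarrow> real"
  interpret P: prob_space ?M
    by (intro prob_space_PiM prob_space_unit_uniform)
  have meas: "staircase T e \<theta> (t i) \<in> borel_measurable unit_uniform" for i
    by (intro borel_measurable_unit_uniform continuous_on_staircase)
  have X_meas: "X i \<in> borel_measurable ?M" if "i \<in> {1..n}" for i
    unfolding X_def using that meas[of i] by measurable
  have "P.indep_vars (\<lambda>_. borel) X {1..n}"
    unfolding X_def by (intro indep_vars_PiM_components prob_space_unit_uniform meas)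
  moreover have "cont_rv_unit ?M (X i) \<and> proper_rv ?M (X i)" if "i \<in> {1..n}" for i
    using staircase_params.cont_rv_unit_staircase[OF params[OF that]]
      staircase_params.proper_rv_staircase[OF params[OF that] mean[OF that]] that meas[of i]
    unfolding X_def by (auto intro: cont_rv_unit_PiM_component proper_rv_PiM_component prob_space_unit_uniform)
  moreover have "1/2 < P.prob {\<omega> \<in> space ?M. X j \<omega> < X i \<omega>}" if "(i, j) \<in> R" for i j
  proof -
    have ij: "i \<in> {1..n}" "j \<in> {1..n}" "i \<noteq> j"
      using tour that unfolding tournament_def by auto
    show ?thesis
      unfolding X_def
      by (rule prob_staircase_less_gt_half[OF params params ij gap wins[OF that] \<theta>_small]) (use ij in auto)
  qed
  then have "1/2 < P.prob {\<omega> \<in> space ?M. X j \<omega> < X i \<omega>} \<longleftrightarrow> (i, j) \<in> R"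
    if "i \<in> {1..n}" "j \<in> {1..n}" for i j
    using that by (intro P.prob_less_gt_half_iff_tournament[OF tour X_meas])
  ultimately show ?thesis
    using P.prob_space_axioms by blast
qed

lemma staircase_parameters_exist:
  assumes T: "1 \<le> T" and c: "0 < c" "c \<le> 1/8"
  shows "\<exists>e \<theta>. 0 < e \<and> e < 1 \<and> 0 < \<theta> \<and> \<theta> < 1/2 \<and> e < (1 - e) / T * c
    \<and> real T ^ 2 < (1 - 2 * \<theta>) * (real T ^ 2 + 1)"
proof (intro exI conjI)
  let ?e = "c / (4 * T)" and ?\<theta> = "1 / (4 * (real T ^ 2 + 1))"
  have e_le: "?e \<le> c / 4"
    using T c by (intro divide_left_mono) auto
  then show "0 < ?e" "?e < 1"
    using T c by auto
  have "?e = c / T * (1/4)"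
    by simp
  also have "\<dots> < c / T * (1 - ?e)"
    using e_le T c by (intro mult_strict_left_mono) auto
  finally show "?e < (1 - ?e) / T * c"
    by (simp add: mult.commute)
  have "2 < 4 * (real T ^ 2 + 1)"
    by (simp add: ring_distribs add_pos_nonneg)
  then show "0 < ?\<theta>" "?\<theta> < 1/2"
    by (auto intro: divide_strict_left_mono)
  have "(1 - 2 * ?\<theta>) * (real T ^ 2 + 1) = real T ^ 2 + 1/2"
    using \<open>2 < 4 * (real T ^ 2 + 1)\<close> by (simp add: field_simps)
  then show "real T ^ 2 < (1 - 2 * ?\<theta>) * (real T ^ 2 + 1)"
    by simp
qed

theorem theorem1p2:
  fixes n :: nat and R :: "(nat \<times> nat) set"
  assumes "tournament {1..n} R"
  shows "\<exists>(M :: (nat \<Rightarrow> real) measure) (X :: nat \<Rightarrow> (nat \<Rightarrow> real) \<Rightarrow> real).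
           prob_space M \<and>
           prob_space.indep_vars M (\<lambda>_. borel) X {1..n} \<and>
           (\<forall>i\<in>{1..n}. cont_rv_unit M (X i) \<and> proper_rv M (X i)) \<and>
           (\<forall>i\<in>{1..n}. \<forall>j\<in>{1..n}.
              measure M {\<omega> \<in> space M. X i \<omega> > X j \<omega>} > 1 / 2 \<longleftrightarrow> (i, j) \<in> R)"
proof -
  define T where "T = 2 * (n * n) + 1"
  obtain e \<theta> where e: "0 < e" "e < 1" and \<theta>: "0 < \<theta>" "\<theta> < 1/2"
    and gap: "e < (1 - e) / T * profile_step n" and \<theta>_small: "real T ^ 2 < (1 - 2 * \<theta>) * (real T ^ 2 + 1)"
    using staircase_parameters_exist[of T "profile_step n"] profile_step_pos profile_step_le
    unfolding T_def by auto
  show ?thesis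
  proof (rule staircases_realize_tournament[OF assms _ _ gap _ \<theta>_small])
    show "staircase_params T e \<theta> (profile n R v)" if "v \<in> {1..n}" for v
      using e \<theta> that profile_nonneg profile_le_one by unfold_locales (auto simp: T_def)
    show "(\<Sum>r<T. profile n R v r) = real T / 2" for v
      unfolding T_def by (rule sum_profile)
    show "real T + 1 \<le> 2 * real (card {r \<in> {..<T}. profile n R j r + profile_step n \<le> profile n R i r})"
      if "(i, j) \<in> R" for i j
      unfolding T_def using assms that by (rule card_profile_wins)
  qed
qed

end
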